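(* Let $\delta>0$ and let $b>0$ be an integer. Suppose that $M$ is a $(\delta,b)$-map of perimeter $n$ and that every vertex of $M$ is at distance at most $r$ from a boundary vertex, or from a non-flat interior vertex, or from a vertex of a non-flat face of $M$. Then $\mathrm{Area}(M)\le Ln$, where $L$ depends only on $\delta,b,r$ and is exponential in $r$.
   Context: A map is a finite, connected, simply connected 2-complex embedded in the plane; $\mathrm{Area}(M)$ is its number of faces, its perimeter is the length of its closed boundary path, and distances are combinatorial distances in the 1-skeleton. Degrees of vertices (number of oriented edges starting there, loops counted twice) and of faces (length of the boundary path) are as usual. A corner of a face $\Pi$ at a vertex $o$ is a pair of consecutive edges $e,f$ of the boundary path of $\Pi$ with $e_+=f_-=o$. An angle function assigns a non-negative real number (angle) to each corner of each face. For a face $\Pi$ of degree $d$, let $\Sigma_\Pi$ be the sum of its corner angles; its curvature is $\Sigma_\Pi-\pi(d-2)$. For a vertex $o$, let $\Sigma_o$ be the sum of angles of all corners at $o$ and $\mu(o)$ the number of times the boundary path of $M$ passes through $o$; its curvature is $(2-\mu(o))\pi-\Sigma_o$. A face or interior vertex is flat if its curvature is $0$, non-flat otherwise. A $(\delta,b)$-map is a map with an angle function such that every non-flat face and every non-flat interior vertex has curvature at most $-\delta$, and every vertex and every face has degree at most $b$. *)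

theory Defs
  imports Complex_Main
begin

text \<open>
  A map (finite connected simply connected 2-complex in the plane) is encoded as a
  connected combinatorial map of genus 0 (an oriented planar map), with one face
  distinguished as the outer (unbounded) face.  Darts (oriented edges) are natural
  numbers; alpha reverses a dart, sigma is the rotation around the source vertex,
  and phi = sigma o alpha walks along face boundaries.  The record also carries the angle
  function: the corner of a face between the consecutive boundary edges d and
  phi d (located at the head of d) is identified with the dart d and gets angle
  cm_angle d.
\<close>

record cmap =
  cm_darts :: "nat set"
  cm_alpha :: "nat \<Rightarrow> nat"
  cm_sigma :: "nat \<Rightarrow> nat"
  cm_outer :: "nat set"
  cm_angle :: "nat \<Rightarrow> real"

definition orb :: "('a \<Rightarrow> 'a) \<Rightarrow> 'a \<Rightarrow> 'a set" where
  "orb f x = {(f ^^ n) x | n. True}"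

definition cm_phi :: "cmap \<Rightarrow> nat \<Rightarrow> nat" where
  "cm_phi M = cm_sigma M \<circ> cm_alpha M"

definition src :: "cmap \<Rightarrow> nat \<Rightarrow> nat set" where
  "src M d = orb (cm_sigma M) d"

definition tgt :: "cmap \<Rightarrow> nat \<Rightarrow> nat set" where
  "tgt M d = src M (cm_alpha M d)"

definition vertices :: "cmap \<Rightarrow> nat set set" where
  "vertices M = {src M d | d. d \<in> cm_darts M}"

definition edges :: "cmap \<Rightarrow> nat set set" where
  "edges M = {{d, cm_alpha M d} | d. d \<in> cm_darts M}"

definition all_faces :: "cmap \<Rightarrow> nat set set" where
  "all_faces M = {orb (cm_phi M) d | d. d \<in> cm_darts M}"

definition faces :: "cmap \<Rightarrow> nat set set" where
  "faces M = all_faces M - {cm_outer M}"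

definition cm_connected :: "cmap \<Rightarrow> bool" where
  "cm_connected M \<longleftrightarrow>
     (\<forall>d\<in>cm_darts M. \<forall>d'\<in>cm_darts M.
        (d, d') \<in> {(x, y). x \<in> cm_darts M \<and> (y = cm_alpha M x \<or> y = cm_sigma M x)}\<^sup>*)"

definition is_map :: "cmap \<Rightarrow> bool" where
  "is_map M \<longleftrightarrow>
     finite (cm_darts M) \<and>
     bij_betw (cm_alpha M) (cm_darts M) (cm_darts M) \<and>
     (\<forall>d\<in>cm_darts M. cm_alpha M (cm_alpha M d) = d \<and> cm_alpha M d \<noteq> d) \<and>
     bij_betw (cm_sigma M) (cm_darts M) (cm_darts M) \<and>
     cm_connected M \<and>
     card (vertices M) + card (all_faces M) = card (edges M) + 2 \<and>
     cm_outer M \<in> all_faces M \<and>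
     (\<forall>F\<in>faces M. \<forall>d\<in>F. cm_angle M d \<ge> 0)"

definition area :: "cmap \<Rightarrow> nat" where
  "area M = card (faces M)"

text \<open>perimeter = length of the boundary path = length of the outer face\<close>
definition perimeter :: "cmap \<Rightarrow> nat" where
  "perimeter M = card (cm_outer M)"

definition vdeg :: "cmap \<Rightarrow> nat set \<Rightarrow> nat" where
  "vdeg M v = card {d \<in> cm_darts M. src M d = v}"

definition fdeg :: "nat set \<Rightarrow> nat" where
  "fdeg F = card F"

text \<open>number of times the boundary path passes through v\<close>
definition mu :: "cmap \<Rightarrow> nat set \<Rightarrow> nat" where
  "mu M v = card {d \<in> cm_outer M. tgt M d = v}"

definition interior_vertex :: "cmap \<Rightarrow> nat set \<Rightarrow> bool" where
  "interior_vertex M v \<longleftrightarrow> v \<in> vertices M \<and> mu M v = 0"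

definition boundary_vertex :: "cmap \<Rightarrow> nat set \<Rightarrow> bool" where
  "boundary_vertex M v \<longleftrightarrow> v \<in> vertices M \<and> mu M v > 0"

definition face_curv :: "cmap \<Rightarrow> nat set \<Rightarrow> real" where
  "face_curv M F = (\<Sum>d\<in>F. cm_angle M d) - pi * (real (fdeg F) - 2)"

definition vertex_angle_sum :: "cmap \<Rightarrow> nat set \<Rightarrow> real" where
  "vertex_angle_sum M v =
     (\<Sum>d\<in>{d. d \<in> \<Union>(faces M) \<and> tgt M d = v}. cm_angle M d)"

definition vertex_curv :: "cmap \<Rightarrow> nat set \<Rightarrow> real" where
  "vertex_curv M v = (2 - real (mu M v)) * pi - vertex_angle_sum M v"

definition delta_b_map :: "real \<Rightarrow> nat \<Rightarrow> cmap \<Rightarrow> bool" where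
  "delta_b_map \<delta> b M \<longleftrightarrow>
     is_map M \<and>
     (\<forall>F\<in>faces M. face_curv M F \<noteq> 0 \<longrightarrow> face_curv M F \<le> - \<delta>) \<and>
     (\<forall>v. interior_vertex M v \<longrightarrow> vertex_curv M v \<noteq> 0 \<longrightarrow> vertex_curv M v \<le> - \<delta>) \<and>
     (\<forall>v\<in>vertices M. vdeg M v \<le> b) \<and>
     (\<forall>F\<in>faces M. fdeg F \<le> b)"

definition adj :: "cmap \<Rightarrow> (nat set \<times> nat set) set" where
  "adj M = {(src M d, tgt M d) | d. d \<in> cm_darts M}"

definition dist_le :: "cmap \<Rightarrow> nat \<Rightarrow> nat set \<Rightarrow> nat set \<Rightarrow> bool" where
  "dist_le M r v w \<longleftrightarrow> (\<exists>k\<le>r. (v, w) \<in> adj M ^^ k)"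

definition special_vertex :: "cmap \<Rightarrow> nat set \<Rightarrow> bool" where
  "special_vertex M w \<longleftrightarrow>
     boundary_vertex M w \<or>
     (interior_vertex M w \<and> vertex_curv M w \<noteq> 0) \<or>
     (\<exists>F\<in>faces M. face_curv M F \<noteq> 0 \<and> (\<exists>d\<in>F. src M d = w))"

end

theory Submission
  imports Defs "HOL-Combinatorics.Orbits"
begin

text \<open>
  Combinatorial Gauss--Bonnet: since the face orbits partition the darts, the outer face
  has n darts, there are 2E darts, and V - E + F = 2, the curvatures of all faces and
  vertices add up to exactly 2\<pi>.  Boundary vertices contribute at most \<pi> each, and
  every non-flat interior vertex or face contributes at most -\<delta>; hence there are at
  most \<pi>n/\<delta> non-flat vertices and faces.  So the special vertices (boundary vertices,
  non-flat interior vertices, vertices of non-flat faces) number O(n), every vertex lies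
  in an r-ball around one of them, such a ball has at most (2b)^r vertices, and the
  area is at most the number of darts, i.e. at most b times the number of vertices.
\<close>

lemma funpow_in_invariant: "f ` D \<subseteq> D \<Longrightarrow> x \<in> D \<Longrightarrow> (f ^^ n) x \<in> D"
  by (induction n) auto

lemma orb_subset_invariant: "f ` D \<subseteq> D \<Longrightarrow> x \<in> D \<Longrightarrow> orb f x \<subseteq> D"
  unfolding orb_def using funpow_in_invariant[of f D x] by auto

lemma self_in_orb: "x \<in> orb f x"
  unfolding orb_def by (auto intro: exI[of _ 0])

lemma orb_eq_of_mem:
  assumes "finite D" "bij_betw f D D" "x \<in> D" "y \<in> orb f x"
  shows "orb f y = orb f x"
proof -
  have fD: "f ` D \<subseteq> D" using assms(2) by (simp add: bij_betw_def)
  \<comment> \<open>extending f by the identity outside D gives a permutation with the same orbits on D\<close>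
  define g where "g z = (if z \<in> D then f z else z)" for z
  have "g permutes D"
    using assms(2) by (intro bij_imp_permutes) (auto simp: g_def cong: bij_betw_cong)
  then have perm: "permutation g" using assms(1) permutation_permutes by blast
  have "(g ^^ n) z = (f ^^ n) z" if "z \<in> D" for n z
    using that by (induction n) (auto simp: g_def funpow_in_invariant[OF fD])
  then have orb_g: "orb f z = orbit g z" if "z \<in> D" for z
    using that unfolding orb_def orbit_altdef_permutation[OF perm] by simp
  have "y \<in> D" using orb_subset_invariant[OF fD assms(3)] assms(4) by blast
  then show ?thesis
    using orb_g assms(3,4) orbit_cyclic_eq3[OF cyclic_on_orbit'[OF perm]] by metis
qed

lemma orb_disjoint:
  assumes "finite D" "bij_betw f D D" "x \<in> D" "y \<in> D" "orb f x \<noteq> orb f y"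
  shows "orb f x \<inter> orb f y = {}"
  using orb_eq_of_mem[OF assms(1,2,3)] orb_eq_of_mem[OF assms(1,2,4)] assms(5) by blast

lemma sum_if_const:
  "finite A \<Longrightarrow> (\<Sum>x\<in>A. if P x then c else 0) = (c :: real) * card {x \<in> A. P x}"
  by (simp add: sum.inter_filter[symmetric] mult.commute)

definition boundary_vertices :: "cmap \<Rightarrow> nat set set" where
  "boundary_vertices M = {v. boundary_vertex M v}"

definition nonflat_interior_vertices :: "cmap \<Rightarrow> nat set set" where
  "nonflat_interior_vertices M = {v. interior_vertex M v \<and> vertex_curv M v \<noteq> 0}"

definition nonflat_faces :: "cmap \<Rightarrow> nat set set" where
  "nonflat_faces M = {F \<in> faces M. face_curv M F \<noteq> 0}"

definition special_vertices :: "cmap \<Rightarrow> nat set set" where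
  "special_vertices M = {w \<in> vertices M. special_vertex M w}"

context
  fixes M :: cmap
  assumes map: "is_map M"
begin

lemma finite_darts: "finite (cm_darts M)"
  using map by (simp add: is_map_def)

lemma alpha_in_darts: "d \<in> cm_darts M \<Longrightarrow> cm_alpha M d \<in> cm_darts M"
  using map by (auto simp: is_map_def bij_betw_def)

lemma bij_betw_phi: "bij_betw (cm_phi M) (cm_darts M) (cm_darts M)"
  using map unfolding is_map_def cm_phi_def by (blast intro: bij_betw_trans)

lemma all_faces_eq: "all_faces M = orb (cm_phi M) ` cm_darts M"
  unfolding all_faces_def by auto

lemma face_subset_darts: "F \<in> all_faces M \<Longrightarrow> F \<subseteq> cm_darts M"
  using orb_subset_invariant[OF bij_betw_imp_surj_on[OF bij_betw_phi, THEN equalityD1]]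
  unfolding all_faces_eq by blast

lemma finite_face: "F \<in> all_faces M \<Longrightarrow> finite F"
  using face_subset_darts finite_darts finite_subset by blast

lemma finite_all_faces: "finite (all_faces M)"
  using finite_darts by (simp add: all_faces_eq)

lemma finite_faces: "finite (faces M)"
  using finite_all_faces by (simp add: faces_def)

lemma Union_all_faces: "\<Union>(all_faces M) = cm_darts M"
  using face_subset_darts self_in_orb[of _ "cm_phi M"] unfolding all_faces_eq by auto

lemma all_faces_disjoint:
  "F \<in> all_faces M \<Longrightarrow> G \<in> all_faces M \<Longrightarrow> F \<noteq> G \<Longrightarrow> F \<inter> G = {}"
  unfolding all_faces_eq using orb_disjoint[OF finite_darts bij_betw_phi] by auto

lemma outer_in_all_faces: "cm_outer M \<in> all_faces M"
  using map by (simp add: is_map_def)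

lemma finite_outer: "finite (cm_outer M)"
  using finite_face outer_in_all_faces .

lemma card_all_faces: "card (all_faces M) = card (faces M) + 1"
  using finite_all_faces outer_in_all_faces unfolding faces_def
  by (metis card_Suc_Diff1 Suc_eq_plus1)

lemma vertices_eq: "vertices M = src M ` cm_darts M"
  unfolding vertices_def by auto

lemma finite_vertices: "finite (vertices M)"
  using finite_darts by (simp add: vertices_eq)

lemma tgt_in_vertices: "d \<in> cm_darts M \<Longrightarrow> tgt M d \<in> vertices M"
  unfolding tgt_def vertices_eq using alpha_in_darts by blast

lemma card_darts_eq_twice_edges: "card (cm_darts M) = 2 * card (edges M)"
proof -
  have inv: "cm_alpha M (cm_alpha M d) = d" "cm_alpha M d \<noteq> d" if "d \<in> cm_darts M" for d
    using map that by (auto simp: is_map_def)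
  have darts_eq: "cm_darts M = \<Union>(edges M)"
    unfolding edges_def using alpha_in_darts by auto
  have edge_eq: "{d, cm_alpha M d} = {x, cm_alpha M x}"
    if "d \<in> cm_darts M" "x \<in> {d, cm_alpha M d}" for d x
    using that inv by auto
  have disj: "pairwise disjnt (edges M)"
  proof (rule pairwiseI)
    fix e e' assume "e \<in> edges M" "e' \<in> edges M" "e \<noteq> e'"
    then show "disjnt e e'"
      unfolding edges_def disjnt_def using edge_eq by blast
  qed
  have card_edge: "card e = 2" if "e \<in> edges M" for e
    using that inv unfolding edges_def card_2_iff by fastforce
  have "finite (edges M)"
    unfolding edges_def using finite_darts by auto
  then have "card (\<Union>(edges M)) = (\<Sum>e\<in>edges M. card e)"
    using disj card_edge by (intro card_Union_disjoint) (auto simp: card_ge_0_finite)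
  then show ?thesis
    using darts_eq card_edge by simp
qed

lemma faces_disjoint: "F \<in> faces M \<Longrightarrow> G \<in> faces M \<Longrightarrow> F \<noteq> G \<Longrightarrow> F \<inter> G = {}"
  using all_faces_disjoint by (auto simp: faces_def)

lemma finite_inner_darts: "finite (\<Union>(faces M))"
  using finite_faces finite_face by (auto simp: faces_def)

lemma inner_darts_Un_outer: "\<Union>(faces M) \<union> cm_outer M = cm_darts M"
  using Union_all_faces outer_in_all_faces unfolding faces_def by blast

lemma inner_darts_Int_outer: "\<Union>(faces M) \<inter> cm_outer M = {}"
  using all_faces_disjoint outer_in_all_faces unfolding faces_def by blast

lemma sum_face_curv:
  "(\<Sum>F\<in>faces M. face_curv M F) =
     (\<Sum>d\<in>\<Union>(faces M). cm_angle M d) - pi * card (\<Union>(faces M)) + 2 * pi * card (faces M)"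
proof -
  have fin: "\<forall>F\<in>faces M. finite F" and disj: "\<forall>F\<in>faces M. \<forall>G\<in>faces M. F \<noteq> G \<longrightarrow> F \<inter> G = {}"
    using finite_face faces_disjoint by (auto simp: faces_def)
  have "(\<Sum>F\<in>faces M. face_curv M F) =
      (\<Sum>F\<in>faces M. \<Sum>d\<in>F. cm_angle M d) - pi * (\<Sum>F\<in>faces M. real (card F)) + 2 * pi * card (faces M)"
    unfolding face_curv_def fdeg_def
    by (simp add: sum_subtractf sum.distrib sum_distrib_left algebra_simps)
  also have "(\<Sum>F\<in>faces M. \<Sum>d\<in>F. cm_angle M d) = (\<Sum>d\<in>\<Union>(faces M). cm_angle M d)"
    by (simp add: sum.Union_disjoint[OF fin disj])
  also have "(\<Sum>F\<in>faces M. real (card F)) = card (\<Union>(faces M))"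
    using card_Union_disjoint[of "faces M"] fin disj by (simp add: pairwise_def disjnt_def)
  finally show ?thesis .
qed

lemma sum_vertex_curv:
  "(\<Sum>v\<in>vertices M. vertex_curv M v) =
     2 * pi * card (vertices M) - pi * card (cm_outer M) - (\<Sum>d\<in>\<Union>(faces M). cm_angle M d)"
proof -
  have tgt_inner: "tgt M ` \<Union>(faces M) \<subseteq> vertices M" and tgt_outer: "tgt M ` cm_outer M \<subseteq> vertices M"
    using tgt_in_vertices inner_darts_Un_outer by blast+
  have "(\<Sum>v\<in>vertices M. vertex_curv M v) =
      2 * pi * card (vertices M) - pi * (\<Sum>v\<in>vertices M. real (mu M v)) - (\<Sum>v\<in>vertices M. vertex_angle_sum M v)"
    unfolding vertex_curv_def by (simp add: sum_subtractf sum.distrib sum_distrib_left algebra_simps)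
  also have "(\<Sum>v\<in>vertices M. real (mu M v)) = card (cm_outer M)"
    using sum.group[OF finite_outer finite_vertices tgt_outer, of "\<lambda>_. 1::nat"]
    unfolding mu_def by (simp flip: of_nat_sum)
  also have "(\<Sum>v\<in>vertices M. vertex_angle_sum M v) = (\<Sum>d\<in>\<Union>(faces M). cm_angle M d)"
    using sum.group[OF finite_inner_darts finite_vertices tgt_inner, of "cm_angle M"]
    unfolding vertex_angle_sum_def by simp
  finally show ?thesis .
qed

theorem gauss_bonnet:
  "(\<Sum>F\<in>faces M. face_curv M F) + (\<Sum>v\<in>vertices M. vertex_curv M v) = 2 * pi"
proof -
  have darts: "card (\<Union>(faces M)) + card (cm_outer M) = 2 * card (edges M)"
    using card_Un_disjoint[OF finite_inner_darts finite_outer inner_darts_Int_outer]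
      inner_darts_Un_outer card_darts_eq_twice_edges by simp
  have euler: "card (vertices M) + card (faces M) + 1 = card (edges M) + 2"
    using map card_all_faces by (simp add: is_map_def)
  have "real (card (vertices M)) + card (faces M) = card (edges M) + 1"
    using arg_cong[OF euler, of real] by simp
  moreover have "real (card (\<Union>(faces M))) + card (cm_outer M) = 2 * card (edges M)"
    using arg_cong[OF darts, of real] by simp
  ultimately have "2 * real (card (vertices M)) + 2 * card (faces M) =
      2 + card (\<Union>(faces M)) + card (cm_outer M)"
    by linarith
  then have "pi * (2 * real (card (vertices M)) + 2 * card (faces M)) =
      pi * (2 + card (\<Union>(faces M)) + card (cm_outer M))"
    by simp
  then show ?thesis
    unfolding sum_face_curv sum_vertex_curv by (simp add: algebra_simps)
qed

lemma boundary_vertices_subset: "boundary_vertices M \<subseteq> tgt M ` cm_outer M"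
proof
  fix v assume "v \<in> boundary_vertices M"
  then have "{d \<in> cm_outer M. tgt M d = v} \<noteq> {}"
    by (auto simp: boundary_vertices_def boundary_vertex_def mu_def simp del: Collect_empty_eq)
  then show "v \<in> tgt M ` cm_outer M" by blast
qed

lemma card_boundary_vertices_le_perimeter: "card (boundary_vertices M) \<le> perimeter M"
  unfolding perimeter_def
  using card_mono[OF finite_imageI[OF finite_outer] boundary_vertices_subset]
    card_image_le[OF finite_outer, of "tgt M"]
  by linarith

lemma vertex_curv_le_pi: "boundary_vertex M v \<Longrightarrow> vertex_curv M v \<le> pi"
proof -
  assume "boundary_vertex M v"
  then have "(2 - real (mu M v)) * pi \<le> pi"
    by (simp add: boundary_vertex_def algebra_simps)
  moreover have "vertex_angle_sum M v \<ge> 0"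
    using map unfolding vertex_angle_sum_def is_map_def by (auto intro: sum_nonneg)
  ultimately show ?thesis unfolding vertex_curv_def by linarith
qed

lemma sum_vdeg: "(\<Sum>v\<in>vertices M. vdeg M v) = card (cm_darts M)"
  using sum.group[OF finite_darts finite_vertices, of "src M" "\<lambda>_. 1::nat"]
  by (simp add: vdeg_def vertices_eq)

lemma area_le_card_darts: "area M \<le> card (cm_darts M)"
proof -
  have "area M \<le> card (all_faces M)"
    using card_all_faces by (simp add: area_def)
  also have "\<dots> \<le> card (cm_darts M)"
    unfolding all_faces_eq using finite_darts by (rule card_image_le)
  finally show ?thesis .
qed

lemma finite_in_neighbours: "finite {u. (u, w) \<in> adj M}"
  by (rule finite_subset[of _ "src M ` cm_darts M"]) (auto simp: adj_def finite_darts)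

lemma card_in_neighbours_le:
  assumes "\<forall>v\<in>vertices M. vdeg M v \<le> b"
  shows "card {u. (u, w) \<in> adj M} \<le> b"
proof -
  let ?in = "{d \<in> cm_darts M. tgt M d = w}" and ?out = "{d \<in> cm_darts M. src M d = w}"
  have inj: "inj_on (cm_alpha M) (cm_darts M)"
    using map by (simp add: is_map_def bij_betw_def)
  have "{u. (u, w) \<in> adj M} = src M ` ?in"
    unfolding adj_def by auto
  then have "card {u. (u, w) \<in> adj M} \<le> card ?in"
    using finite_darts by (simp add: card_image_le)
  also have "\<dots> = card (cm_alpha M ` ?in)"
    using inj by (intro card_image[symmetric]) (auto intro: inj_on_subset)
  also have "\<dots> \<le> card ?out"
    using finite_darts alpha_in_darts by (intro card_mono) (auto simp: tgt_def)
  also have "\<dots> \<le> b"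
  proof (cases "w \<in> vertices M")
    case True
    then show ?thesis using assms by (simp add: vdeg_def)
  next
    case False
    then have "?out = {}" unfolding vertices_def by blast
    then show ?thesis by (simp only: card.empty zero_le)
  qed
  finally show ?thesis .
qed

lemma card_relpow_adj_le:
  assumes "\<forall>v\<in>vertices M. vdeg M v \<le> b"
  shows "card {v \<in> vertices M. (v, w) \<in> adj M ^^ k} \<le> b ^ k"
proof (induction k arbitrary: w)
  case 0
  then show ?case by (simp add: card_le_Suc0_iff_eq)
next
  case (Suc k)
  have "{v \<in> vertices M. (v, w) \<in> adj M ^^ Suc k} =
      (\<Union>u\<in>{u. (u, w) \<in> adj M}. {v \<in> vertices M. (v, u) \<in> adj M ^^ k})"
    by auto
  then have "card {v \<in> vertices M. (v, w) \<in> adj M ^^ Suc k} \<le>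
      (\<Sum>u\<in>{u. (u, w) \<in> adj M}. card {v \<in> vertices M. (v, u) \<in> adj M ^^ k})"
    using card_UN_le[OF finite_in_neighbours] by simp
  also have "\<dots> \<le> card {u. (u, w) \<in> adj M} * b ^ k"
    using sum_mono[of _ _ "\<lambda>_. b ^ k", OF Suc.IH] by simp
  also have "\<dots> \<le> b ^ Suc k"
    using card_in_neighbours_le[OF assms] by simp
  finally show ?case .
qed

lemma card_ball_le:
  assumes "\<forall>v\<in>vertices M. vdeg M v \<le> b" "b > 0"
  shows "card {v \<in> vertices M. dist_le M r v w} \<le> (2 * b) ^ r"
proof -
  have "{v \<in> vertices M. dist_le M r v w} \<subseteq> (\<Union>k\<le>r. {v \<in> vertices M. (v, w) \<in> adj M ^^ k})"
    by (auto simp: dist_le_def)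
  then have "card {v \<in> vertices M. dist_le M r v w} \<le>
      card (\<Union>k\<le>r. {v \<in> vertices M. (v, w) \<in> adj M ^^ k})"
    using finite_vertices by (intro card_mono) auto
  also have "\<dots> \<le> (\<Sum>k\<le>r. card {v \<in> vertices M. (v, w) \<in> adj M ^^ k})"
    by (rule card_UN_le) simp
  also have "\<dots> \<le> (\<Sum>k\<le>r. b ^ r)"
  proof (intro sum_mono)
    fix k assume "k \<in> {..r}"
    then have "b ^ k \<le> b ^ r" using assms(2) by (simp add: power_increasing)
    then show "card {v \<in> vertices M. (v, w) \<in> adj M ^^ k} \<le> b ^ r"
      using card_relpow_adj_le[OF assms(1)] order_trans by blast
  qed
  also have "\<dots> = (r + 1) * b ^ r" by simp
  also have "\<dots> \<le> 2 ^ r * b ^ r"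
    using Suc_leI[OF less_exp[of r]] by (intro mult_le_mono1) simp
  finally show ?thesis by (simp add: power_mult_distrib)
qed

lemma card_vertices_le_special:
  assumes "\<forall>v\<in>vertices M. vdeg M v \<le> b" "b > 0"
    and "\<forall>v\<in>vertices M. \<exists>w\<in>vertices M. dist_le M r v w \<and> special_vertex M w"
  shows "card (vertices M) \<le> (2 * b) ^ r * card (special_vertices M)"
proof -
  have "vertices M = (\<Union>w\<in>special_vertices M. {v \<in> vertices M. dist_le M r v w})"
    using assms(3) by (auto simp: special_vertices_def)
  moreover have "finite (special_vertices M)"
    using finite_vertices by (simp add: special_vertices_def)
  ultimately have "card (vertices M) \<le>
      (\<Sum>w\<in>special_vertices M. card {v \<in> vertices M. dist_le M r v w})"
    by (metis card_UN_le)
  also have "\<dots> \<le> (\<Sum>w\<in>special_vertices M. (2 * b) ^ r)"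
    using card_ball_le[OF assms(1,2)] by (rule sum_mono)
  finally show ?thesis by (simp add: mult.commute)
qed

lemma card_special_vertices_le:
  assumes "\<forall>F\<in>faces M. fdeg F \<le> b"
  shows "card (special_vertices M) \<le>
           perimeter M + card (nonflat_interior_vertices M) + b * card (nonflat_faces M)"
proof -
  let ?B = "boundary_vertices M" and ?NV = "nonflat_interior_vertices M"
    and ?NFV = "\<Union>F\<in>nonflat_faces M. src M ` F"
  have fin_NF: "finite (nonflat_faces M)"
    using finite_faces by (simp add: nonflat_faces_def)
  have fin_face: "finite F" if "F \<in> nonflat_faces M" for F
    using that finite_face by (simp add: nonflat_faces_def faces_def)
  have "special_vertices M \<subseteq> ?B \<union> ?NV \<union> ?NFV"
    by (auto simp: special_vertices_def special_vertex_def boundary_vertices_def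
        nonflat_interior_vertices_def nonflat_faces_def)
  moreover have "finite (?B \<union> ?NV \<union> ?NFV)"
  proof -
    have "?B \<union> ?NV \<subseteq> vertices M"
      by (auto simp: boundary_vertices_def boundary_vertex_def
          nonflat_interior_vertices_def interior_vertex_def)
    then show ?thesis using finite_vertices fin_NF fin_face by (auto intro: finite_subset)
  qed
  ultimately have "card (special_vertices M) \<le> card (?B \<union> ?NV \<union> ?NFV)"
    by (rule card_mono[rotated])
  also have "\<dots> \<le> card ?B + card ?NV + card ?NFV"
    using card_Un_le[of "?B \<union> ?NV" ?NFV] card_Un_le[of ?B ?NV] by linarith
  also have "card ?NFV \<le> (\<Sum>F\<in>nonflat_faces M. card (src M ` F))"
    using fin_NF by (rule card_UN_le)
  also have "\<dots> \<le> (\<Sum>F\<in>nonflat_faces M. b)"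
  proof (rule sum_mono)
    fix F assume "F \<in> nonflat_faces M"
    then have "card F \<le> b"
      using assms by (simp add: nonflat_faces_def fdeg_def)
    then show "card (src M ` F) \<le> b"
      using card_image_le[OF fin_face[OF \<open>F \<in> nonflat_faces M\<close>], of "src M"] by linarith
  qed
  finally show ?thesis
    using card_boundary_vertices_le_perimeter by (simp add: mult.commute)
qed

end

lemma delta_b_map_is_map: "delta_b_map \<delta> b M \<Longrightarrow> is_map M"
  by (simp add: delta_b_map_def)

lemma sum_face_curv_le:
  assumes "delta_b_map \<delta> b M"
  shows "(\<Sum>F\<in>faces M. face_curv M F) \<le> - \<delta> * card (nonflat_faces M)"
proof -
  have "(\<Sum>F\<in>faces M. face_curv M F) \<le> (\<Sum>F\<in>faces M. if face_curv M F \<noteq> 0 then - \<delta> else 0)"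
    using assms by (intro sum_mono) (auto simp: delta_b_map_def)
  also have "\<dots> = - \<delta> * card (nonflat_faces M)"
    using finite_faces[OF delta_b_map_is_map[OF assms]] by (simp add: sum_if_const nonflat_faces_def)
  finally show ?thesis .
qed

lemma sum_vertex_curv_le:
  assumes "delta_b_map \<delta> b M"
  shows "(\<Sum>v\<in>vertices M. vertex_curv M v) \<le>
           pi * card (boundary_vertices M) - \<delta> * card (nonflat_interior_vertices M)"
proof -
  have map: "is_map M" using assms by (rule delta_b_map_is_map)
  have "vertex_curv M v \<le> (if boundary_vertex M v then pi else 0) +
      (if interior_vertex M v \<and> vertex_curv M v \<noteq> 0 then - \<delta> else 0)" if "v \<in> vertices M" for v
    using assms that vertex_curv_le_pi[OF map, of v]
    by (auto simp: delta_b_map_def boundary_vertex_def interior_vertex_def)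
  then have "(\<Sum>v\<in>vertices M. vertex_curv M v) \<le>
      (\<Sum>v\<in>vertices M. if boundary_vertex M v then pi else 0) +
      (\<Sum>v\<in>vertices M. if interior_vertex M v \<and> vertex_curv M v \<noteq> 0 then - \<delta> else 0)"
    by (simp add: sum_mono flip: sum.distrib)
  also have "\<dots> = pi * card (boundary_vertices M) - \<delta> * card (nonflat_interior_vertices M)"
  proof -
    have "boundary_vertices M = {v \<in> vertices M. boundary_vertex M v}"
      "nonflat_interior_vertices M = {v \<in> vertices M. interior_vertex M v \<and> vertex_curv M v \<noteq> 0}"
      by (auto simp: boundary_vertices_def nonflat_interior_vertices_def boundary_vertex_def
          interior_vertex_def)
    then show ?thesis using finite_vertices[OF map] by (simp add: sum_if_const)
  qed
  finally show ?thesis .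
qed

lemma nonflat_count_le:
  assumes "delta_b_map \<delta> b M"
  shows "\<delta> * (card (nonflat_interior_vertices M) + card (nonflat_faces M)) \<le> pi * perimeter M"
proof -
  have map: "is_map M" using assms by (rule delta_b_map_is_map)
  have "2 * pi \<le> pi * card (boundary_vertices M)
      - \<delta> * (card (nonflat_interior_vertices M) + card (nonflat_faces M))"
    using gauss_bonnet[OF map] sum_face_curv_le[OF assms] sum_vertex_curv_le[OF assms]
    by (simp add: algebra_simps)
  moreover have "pi * card (boundary_vertices M) \<le> pi * perimeter M"
    using card_boundary_vertices_le_perimeter[OF map] by simp
  ultimately show ?thesis using pi_gt_zero by linarith
qed

lemma card_special_vertices_le_perimeter:
  assumes "\<delta> > 0" "b > 0" "delta_b_map \<delta> b M"
  shows "real (card (special_vertices M)) \<le> (1 + b * pi / \<delta>) * perimeter M"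
proof -
  let ?NV = "real (card (nonflat_interior_vertices M))" and ?NF = "real (card (nonflat_faces M))"
  have "real (card (special_vertices M)) \<le> perimeter M + ?NV + b * ?NF"
    using card_special_vertices_le[OF delta_b_map_is_map[OF assms(3)], of b] assms(3)
    unfolding delta_b_map_def by (simp flip: of_nat_add of_nat_mult)
  also have "\<dots> \<le> perimeter M + b * (?NV + ?NF)"
    using assms(2) mult_right_mono[of 1 "real b" ?NV] by (simp add: distrib_left)
  also have "?NV + ?NF \<le> pi * perimeter M / \<delta>"
    using nonflat_count_le[OF assms(3)] assms(1) by (simp add: field_simps)
  finally show ?thesis
    using assms(2) by (simp add: algebra_simps mult_left_mono)
qed

lemma area_le_perimeter:
  assumes "\<delta> > 0" "b > 0" "delta_b_map \<delta> b M"
    and "\<forall>v\<in>vertices M. \<exists>w\<in>vertices M. dist_le M r v w \<and> special_vertex M w"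
  shows "real (area M) \<le> b * (1 + b * pi / \<delta>) * (2 * b) ^ r * perimeter M"
proof -
  have map: "is_map M" and vdeg: "\<forall>v\<in>vertices M. vdeg M v \<le> b"
    using assms(3) by (auto simp: delta_b_map_def)
  have "area M \<le> (\<Sum>v\<in>vertices M. vdeg M v)"
    using area_le_card_darts[OF map] sum_vdeg[OF map] by simp
  also have "\<dots> \<le> b * card (vertices M)"
    using vdeg sum_bounded_above[of "vertices M" "vdeg M" b] by (simp add: mult.commute)
  also have "\<dots> \<le> b * ((2 * b) ^ r * card (special_vertices M))"
    using card_vertices_le_special[OF map vdeg assms(2,4)] by simp
  finally have "real (area M) \<le> b * (2 * b) ^ r * real (card (special_vertices M))"
    by (simp flip: of_nat_mult of_nat_power)
  also have "\<dots> \<le> b * (2 * b) ^ r * ((1 + b * pi / \<delta>) * perimeter M)"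
    using card_special_vertices_le_perimeter[OF assms(1-3)] by (intro mult_left_mono) auto
  finally show ?thesis by (simp add: algebra_simps)
qed

theorem theorem1p5:
  fixes \<delta> :: real and b :: nat
  assumes "\<delta> > 0" and "b > 0"
  shows "\<exists>A B :: real. \<forall>(r::nat) (M::cmap).
           delta_b_map \<delta> b M \<and>
           (\<forall>v\<in>vertices M. \<exists>w\<in>vertices M. dist_le M r v w \<and> special_vertex M w)
           \<longrightarrow> real (area M) \<le> A * B ^ r * real (perimeter M)"
  using area_le_perimeter[OF assms] by blast

end
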